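(* Let $M$ be a graded generalized Eulerian $A_n(K)$-module, $n\ge2$. Then $H_1(X_n;M)=\ker(X_n\colon M(-1)\to M)$ and $H_0(X_n;M)=M/X_nM$ are generalized Eulerian $A_{n-1}(K)$-modules.
   Context: $K$ is a field of characteristic zero; $A_n(K)=K\langle X_1,\dots,X_n,\partial_1,\dots,\partial_n\rangle$ graded by $\deg X_i=1$, $\deg\partial_i=-1$; $A_{n-1}(K)\subseteq A_n(K)$ is generated by $X_1,\dots,X_{n-1},\partial_1,\dots,\partial_{n-1}$ and acts on $H_1(X_n;M)$ and $H_0(X_n;M)$. $\mathcal E_m=\sum_{i=1}^mX_i\partial_i$; $|z|$ is the degree of homogeneous $z$. A graded $A_m(K)$-module $M$ is generalized Eulerian if for every homogeneous $z$ there is $a\ge1$ with $(\mathcal E_m-|z|)^az=0$. $M(l)_j=M_{j+l}$. *)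

theory Defs
  imports Main "HOL.Vector_Spaces"
begin

text \<open>A left A_n(K)-module is a K-vector space together with K-linear operators
  X i, D i (i = 1..n) satisfying the Weyl algebra relations (A_n(K) is presented
  by these generators and relations).\<close>
definition weyl_module ::
  "('k::field \<Rightarrow> 'm::ab_group_add \<Rightarrow> 'm) \<Rightarrow> nat \<Rightarrow> (nat \<Rightarrow> 'm \<Rightarrow> 'm) \<Rightarrow> (nat \<Rightarrow> 'm \<Rightarrow> 'm) \<Rightarrow> bool"
where "weyl_module scale n X D \<longleftrightarrow>
   vector_space scale \<and>
   (\<forall>i\<in>{1..n}. Vector_Spaces.linear scale scale (X i) \<and> Vector_Spaces.linear scale scale (D i)) \<and>
   (\<forall>i\<in>{1..n}. \<forall>j\<in>{1..n}. \<forall>v.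
       X i (X j v) = X j (X i v) \<and> D i (D j v) = D j (D i v) \<and>
       D i (X j v) - X j (D i v) = (if i = j then v else 0))"

definition graded_weyl_module ::
  "('k::field \<Rightarrow> 'm::ab_group_add \<Rightarrow> 'm) \<Rightarrow> nat \<Rightarrow> (nat \<Rightarrow> 'm \<Rightarrow> 'm) \<Rightarrow> (nat \<Rightarrow> 'm \<Rightarrow> 'm)
    \<Rightarrow> (int \<Rightarrow> 'm set) \<Rightarrow> bool"
where "graded_weyl_module scale n X D G \<longleftrightarrow>
   weyl_module scale n X D \<and>
   (\<forall>j. module.subspace scale (G j)) \<and>
   (\<forall>v. \<exists>!f::int \<Rightarrow> 'm. finite {j. f j \<noteq> 0} \<and> (\<forall>j. f j \<in> G j) \<and>
          v = (\<Sum>j\<in>{j. f j \<noteq> 0}. f j)) \<and>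
   (\<forall>i\<in>{1..n}. \<forall>j. X i ` G j \<subseteq> G (j + 1) \<and> D i ` G j \<subseteq> G (j - 1))"

definition euler :: "(nat \<Rightarrow> 'm \<Rightarrow> 'm) \<Rightarrow> (nat \<Rightarrow> 'm \<Rightarrow> 'm) \<Rightarrow> nat \<Rightarrow> 'm \<Rightarrow> 'm::ab_group_add"
  where "euler X D m v = (\<Sum>i=1..m. X i (D i v))"

definition shift :: "(int \<Rightarrow> 'm set) \<Rightarrow> int \<Rightarrow> int \<Rightarrow> 'm set"
  where "shift G l j = G (j + l)"

text \<open>Generalized Eulerian property for the graded A_m(K)-module with homogeneous
  components G j, taken modulo the (graded) submodule N: a homogeneous class of
  degree j is represented by z in G j, and the class is zero iff it lies in N.
  With N = {0} this is exactly the definition for the module itself.\<close>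
definition gen_eulerian ::
  "('k::field \<Rightarrow> 'm::ab_group_add \<Rightarrow> 'm) \<Rightarrow> nat \<Rightarrow> (nat \<Rightarrow> 'm \<Rightarrow> 'm) \<Rightarrow> (nat \<Rightarrow> 'm \<Rightarrow> 'm)
    \<Rightarrow> (int \<Rightarrow> 'm set) \<Rightarrow> 'm set \<Rightarrow> bool"
where "gen_eulerian scale m X D G N \<longleftrightarrow>
   (\<forall>j. \<forall>z\<in>G j. \<exists>a::nat. a \<ge> 1 \<and>
      ((\<lambda>v. euler X D m v - scale (of_int j) v) ^^ a) z \<in> N)"

end

theory Submission
  imports Defs
begin

text \<open>Split the Euler operator as \<open>E\<^sub>n = E\<^sub>n\<^sub>-\<^sub>1 + X\<^sub>n\<partial>\<^sub>n\<close>; \<open>E\<^sub>n\<^sub>-\<^sub>1\<close> commutes with \<open>X\<^sub>n\<close>.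
  On \<open>ker X\<^sub>n\<close> the relation \<open>\<partial>\<^sub>nX\<^sub>n - X\<^sub>n\<partial>\<^sub>n = 1\<close> gives \<open>X\<^sub>n\<partial>\<^sub>n = -1\<close>, so there
  \<open>E\<^sub>n - (j - 1) = E\<^sub>n\<^sub>-\<^sub>1 - j\<close>, which accounts for the shift \<open>M(-1)\<close>; and modulo \<open>X\<^sub>nM\<close>
  the operators \<open>E\<^sub>n\<close> and \<open>E\<^sub>n\<^sub>-\<^sub>1\<close> agree. In both cases nilpotence of \<open>E\<^sub>n - |z|\<close> on
  \<open>z\<close> transfers to \<open>E\<^sub>n\<^sub>-\<^sub>1\<close>.\<close>

lemma funpow_eq_on_invariant:
  assumes "z \<in> S" and "\<And>v. v \<in> S \<Longrightarrow> L v \<in> S" and "\<And>v. v \<in> S \<Longrightarrow> T v = L v"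
  shows "(T ^^ k) z = (L ^^ k) z \<and> (L ^^ k) z \<in> S"
  by (induction k) (use assms in auto)

lemma funpow_diff_mem_invariant_subgroup:
  assumes "additive L"
    and "0 \<in> N" and "\<And>a b. a \<in> N \<Longrightarrow> b \<in> N \<Longrightarrow> a + b \<in> N"
    and "\<And>v. v \<in> N \<Longrightarrow> L v \<in> N"
    and "\<And>v. L v - T v \<in> N"
  shows "(L ^^ k) z - (T ^^ k) z \<in> N"
proof (induction k)
  case 0
  show ?case using assms(2) by simp
next
  case (Suc k)
  let ?l = "(L ^^ k) z" and ?t = "(T ^^ k) z"
  have "L ?l - T ?t = L (?l - ?t) + (L ?t - T ?t)"
    by (simp add: additive.diff[OF assms(1)])
  moreover have "L (?l - ?t) + (L ?t - T ?t) \<in> N"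
    using Suc assms(3-5) by blast
  ultimately show ?case by (simp add: add_diff_eq)
qed

lemma linear_additive: "Vector_Spaces.linear s1 s2 f \<Longrightarrow> additive f"
  by (simp add: additive.intro linear_iff)

lemma euler_Suc: "euler X D (Suc m) v = euler X D m v + X (Suc m) (D (Suc m) v)"
  by (simp add: euler_def)

context
  fixes scale :: "'k::field \<Rightarrow> 'm::ab_group_add \<Rightarrow> 'm"
    and n :: nat and X D :: "nat \<Rightarrow> 'm \<Rightarrow> 'm"
  assumes weyl: "weyl_module scale n X D"
begin

lemma weyl_vector_space: "vector_space scale"
  using weyl by (simp add: weyl_module_def)

interpretation vector_space scale
  by (rule weyl_vector_space)

lemma weyl_linear_X: "i \<in> {1..n} \<Longrightarrow> Vector_Spaces.linear scale scale (X i)"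
  using weyl by (simp add: weyl_module_def)

lemma weyl_linear_D: "i \<in> {1..n} \<Longrightarrow> Vector_Spaces.linear scale scale (D i)"
  using weyl by (simp add: weyl_module_def)

lemma weyl_X_commute: "i \<in> {1..n} \<Longrightarrow> j \<in> {1..n} \<Longrightarrow> X i (X j v) = X j (X i v)"
  using weyl by (simp add: weyl_module_def)

lemma weyl_D_X_commutator:
  "i \<in> {1..n} \<Longrightarrow> j \<in> {1..n} \<Longrightarrow> D i (X j v) - X j (D i v) = (if i = j then v else 0)"
  using weyl by (simp add: weyl_module_def)

lemma additive_shifted_euler:
  assumes "m \<le> n"
  shows "additive (\<lambda>v. euler X D m v - scale c v)"
proof
  fix x y
  have "X i (D i (x + y)) = X i (D i x) + X i (D i y)" if "i \<in> {1..m}" for i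
    using that assms linear_additive[OF weyl_linear_X] linear_additive[OF weyl_linear_D]
    by (simp add: additive.add)
  then have "euler X D m (x + y) = euler X D m x + euler X D m y"
    unfolding euler_def by (simp add: sum.distrib)
  then show "euler X D m (x + y) - scale c (x + y) = (euler X D m x - scale c x) + (euler X D m y - scale c y)"
    by (simp add: scale_right_distrib)
qed

lemma X_commute_shifted_euler:
  assumes "m < n"
  shows "X n (euler X D m v - scale c v) = euler X D m (X n v) - scale c (X n v)"
proof -
  have n: "n \<in> {1..n}" using assms by simp
  interpret Xn: module_hom scale scale "X n"
    using weyl_linear_X[OF n] by (simp add: linear_iff_module_hom)
  have "X n (X i (D i v)) = X i (D i (X n v))" if "i \<in> {1..m}" for i
    using that assms weyl_X_commute[OF n, of i] weyl_D_X_commutator[of i n v] by simp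
  then have "X n (euler X D m v) = euler X D m (X n v)"
    unfolding euler_def Xn.sum by (rule sum.cong[OF refl])
  then show ?thesis by (simp add: Xn.diff Xn.scale)
qed

lemma euler_on_kernel_last_X:
  assumes "0 < n" and "X n w = 0"
  shows "euler X D n w = euler X D (n - 1) w - w"
proof -
  have n: "n \<in> {1..n}" using assms(1) by simp
  have "D n (X n w) = 0"
    using assms(2) additive.zero[OF linear_additive[OF weyl_linear_D[OF n]]] by simp
  then have "X n (D n w) = - w"
    using weyl_D_X_commutator[OF n n, of w] by (simp add: minus_equation_iff)
  then show ?thesis
    using euler_Suc[of X D "n - 1" w] assms(1) by simp
qed

lemma gen_eulerian_kernel_last_X:
  assumes "0 < n" and "gen_eulerian scale n X D G {0}"
  shows "gen_eulerian scale (n - 1) X D (\<lambda>j. shift G (-1) j \<inter> {z. X n z = 0}) {0}"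
  unfolding gen_eulerian_def
proof (intro allI ballI)
  fix j z assume "z \<in> shift G (-1) j \<inter> {z. X n z = 0}"
  then have z: "z \<in> G (j + -1)" "X n z = 0" by (auto simp: shift_def)
  define T where "T v = euler X D n v - scale (of_int (j + -1)) v" for v
  define L where "L v = euler X D (n - 1) v - scale (of_int j) v" for v
  obtain a where a: "a \<ge> 1" "(T ^^ a) z = 0"
    using assms(2) z(1) unfolding gen_eulerian_def T_def by fastforce
  have "X n (L v) = 0" if "X n v = 0" for v
    using that assms(1) X_commute_shifted_euler[of "n - 1"]
      additive.zero[OF additive_shifted_euler[of "n - 1"]]
    by (simp add: L_def)
  moreover have "T v = L v" if "X n v = 0" for v
    using that assms(1) euler_on_kernel_last_X[of v]
    by (simp add: T_def L_def scale_left_diff_distrib)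
  ultimately have "(T ^^ a) z = (L ^^ a) z"
    using funpow_eq_on_invariant[of z "{v. X n v = 0}" L T] z(2) by simp
  then show "\<exists>a\<ge>1. ((\<lambda>v. euler X D (n - 1) v - scale (of_int j) v) ^^ a) z \<in> {0}"
    using a by (auto simp: L_def[abs_def])
qed

lemma gen_eulerian_mod_last_X:
  assumes "0 < n" and "gen_eulerian scale n X D G {0}"
  shows "gen_eulerian scale (n - 1) X D G (range (X n))"
  unfolding gen_eulerian_def
proof (intro allI ballI)
  fix j z assume z: "z \<in> G j"
  define T where "T v = euler X D n v - scale (of_int j) v" for v
  define L where "L v = euler X D (n - 1) v - scale (of_int j) v" for v
  have n: "n \<in> {1..n}" using assms(1) by simp
  have Xn: "additive (X n)" using linear_additive[OF weyl_linear_X[OF n]] .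
  obtain a where a: "a \<ge> 1" "(T ^^ a) z = 0"
    using assms(2) z unfolding gen_eulerian_def T_def by fastforce
  have "L v - T v = X n (- D n v)" for v
    using euler_Suc[of X D "n - 1" v] assms(1) by (simp add: L_def T_def additive.minus[OF Xn])
  moreover have "L (X n v) = X n (L v)" for v
    using X_commute_shifted_euler[of "n - 1"] assms(1) by (simp add: L_def)
  moreover have "additive L"
    using additive_shifted_euler[of "n - 1"] by (simp add: L_def[abs_def])
  ultimately have "(L ^^ a) z - (T ^^ a) z \<in> range (X n)"
    by (intro funpow_diff_mem_invariant_subgroup)
      (auto simp: additive.add[OF Xn, symmetric] rev_image_eqI[of 0 UNIV 0 "X n"] additive.zero[OF Xn])
  then show "\<exists>a\<ge>1. ((\<lambda>v. euler X D (n - 1) v - scale (of_int j) v) ^^ a) z \<in> range (X n)"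
    using a by (auto simp: L_def[abs_def])
qed

end

theorem mainTheorem9:
  fixes scale :: "'k::field_char_0 \<Rightarrow> 'm::ab_group_add \<Rightarrow> 'm"
    and n :: nat
    and X D :: "nat \<Rightarrow> 'm \<Rightarrow> 'm"
    and G :: "int \<Rightarrow> 'm set"
  assumes "n \<ge> 2"
    and "graded_weyl_module scale n X D G"
    and "gen_eulerian scale n X D G {0}"
  shows "gen_eulerian scale (n - 1) X D (\<lambda>j. shift G (-1) j \<inter> {z. X n z = 0}) {0} \<and>
         gen_eulerian scale (n - 1) X D G (range (X n))"
proof -
  have "weyl_module scale n X D" and "0 < n"
    using assms(1,2) by (simp_all add: graded_weyl_module_def)
  then show ?thesis
    using gen_eulerian_kernel_last_X gen_eulerian_mod_last_X assms(3) by blast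
qed

end
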